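(* Let $\gamma\in(0.5,1)$ and let $a:[0,\infty)\to[0,\infty)$ be a decreasing, bounded, piecewise continuous function such that $\lim_{t\to\infty}t^{\gamma}a(t)$ exists and is positive. Then for any given $\mu>0$ and $p>2$, \[ e^{-\mu\int_0^t a(s)\,ds}=o\big(t^{-\frac{p\gamma}{2}}\big)\quad (t\to\infty), \] and \[ \lim_{t\to\infty} t^{\frac{p\gamma}{2}}\int_0^t a^{\frac{p+2}{2}}(s)\,e^{-\mu\int_s^t a(r)\,dr}\,ds=\frac{\big(\lim_{t\to\infty}t^{\gamma}a(t)\big)^{\frac{p}{2}}}{\mu}. \]
   Context: $f(t)=o(g(t))$ means $\limsup_{t\to\infty}|f(t)/g(t)|=0$. *)

theory Defs
  imports "HOL-Analysis.Analysis" "HOL-Library.Landau_Symbols"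
begin

definition piecewise_continuous_nonneg :: "(real \<Rightarrow> real) \<Rightarrow> bool" where
  "piecewise_continuous_nonneg a \<longleftrightarrow>
     (\<forall>T\<ge>0. \<exists>S. finite S \<and>
        (\<forall>x\<in>{0..T} - S. continuous (at x within {0..}) a) \<and>
        (\<forall>s\<in>S \<inter> {0..T}. (\<exists>l. (a \<longlongrightarrow> l) (at_right s)) \<and>
                           (s > 0 \<longrightarrow> (\<exists>l. (a \<longlongrightarrow> l) (at_left s)))))"

end

theory Submission
  imports Defs "HOL-Real_Asymp.Real_Asymp"
begin

text \<open>Let A(t) be the integral of a over [0,t]. Since a decreases, A(t) \<ge> t a(t) ~ L t^(1-\<gamma>),
  so exp(-\<mu> A(t)) decays faster than any power of t. For the second claim put q = (p+2)/2 and
  k = \<gamma>(q-1) = p\<gamma>/2. The quantity in question is F(t)/G(t) with F(t) the integral of a^q e^(\<mu>A)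
  over [0,t] and G(t) = t^(-k) e^(\<mu>A(t)). Here G \<rightarrow> \<infinity>, and away from the jumps of a
  F'/G' = a^q / (t^(-k) (\<mu>a - k/t)), which in terms of b(t) = t^\<gamma> a(t) \<rightarrow> L equals
  b^q / (\<mu>b - k t^(\<gamma>-1)) \<rightarrow> L^(q-1)/\<mu>. L'Hopital's rule, in a form phrased with integrals so
  that it tolerates the jumps of a, gives the limit.\<close>

lemma absolutely_integrable_on_antimono_on:
  fixes h :: "real \<Rightarrow> real"
  assumes "antimono_on {s..t} h"
  shows "h absolutely_integrable_on {s..t}"
proof -
  have "mono_on {s..t} (\<lambda>x. - h x)"
    using assms by (auto simp: monotone_on_def)
  then have "integrable (lebesgue_on {s..t}) (\<lambda>x. - h x)"
    by (rule integrable_mono_on)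
  then have "integrable (lebesgue_on {s..t}) h"
    using integrable_minus by fastforce
  then show ?thesis
    by (simp add: absolutely_integrable_measurable_real borel_measurable_integrable)
qed

lemma integrable_on_antimono_on_atLeast:
  fixes a :: "real \<Rightarrow> real"
  assumes "antimono_on {s..} a"
  shows "a integrable_on {s..t}"
  using absolutely_integrable_on_antimono_on[OF monotone_on_subset[OF assms]]
  by (simp add: absolutely_integrable_on_def)

lemma integrable_on_antimono_on_mult_continuous:
  fixes h E :: "real \<Rightarrow> real"
  assumes "antimono_on {s..t} h" and "continuous_on {s..t} E"
  shows "(\<lambda>x. h x * E x) integrable_on {s..t}"
proof -
  have "(\<lambda>x. E x * h x) absolutely_integrable_on {s..t}"
    using assms
    by (intro absolutely_integrable_bounded_measurable_product_real absolutely_integrable_on_antimono_on)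
       (auto intro: continuous_imp_measurable_on_sets_lebesgue compact_imp_bounded compact_continuous_image)
  then show ?thesis
    by (simp add: mult.commute absolutely_integrable_on_def)
qed

lemma has_integral_integral_diff:
  fixes f :: "real \<Rightarrow> 'a::banach"
  assumes "f integrable_on {a..t}" and "a \<le> s" and "s \<le> t"
  shows "(f has_integral (integral {a..t} f - integral {a..s} f)) {s..t}"
proof -
  have "integral {a..t} f - integral {a..s} f = integral {s..t} f"
    using Henstock_Kurzweil_Integration.integral_combine[OF assms(2,3,1)] by (simp add: algebra_simps)
  moreover have "f integrable_on {s..t}"
    by (rule integrable_subinterval_real[OF assms(1)]) (use assms in auto)
  ultimately show ?thesis
    by (simp add: has_integral_integrable_integral)
qed

lemma has_real_derivative_integral_continuous_at:
  fixes a :: "real \<Rightarrow> real"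
  assumes "a integrable_on {c..T}" and "finite S" and "x \<in> {c<..<T} - S"
    and "continuous (at x within {c..}) a"
  shows "((\<lambda>u. integral {c..u} a) has_real_derivative a x) (at x)"
proof -
  have "continuous (at x within ({c..T} - S)) a"
    by (rule continuous_within_subset[OF assms(4)]) auto
  then have "((\<lambda>u. integral {c..u} a) has_vector_derivative a x) (at x within ({c..T} - S))"
    using integral_has_vector_derivative_continuous_at[OF assms(1) _ assms(2)] assms(3) by auto
  then have "((\<lambda>u. integral {c..u} a) has_vector_derivative a x) (at x within ({c<..<T} - S))"
    by (rule has_vector_derivative_within_subset) auto
  moreover have "at x within ({c<..<T} - S) = at x"
    by (rule at_within_open) (use assms(2,3) in \<open>auto intro!: open_Diff finite_imp_closed\<close>)
  ultimately show ?thesis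
    by (simp add: has_real_derivative_iff_has_vector_derivative)
qed

lemma eventually_integral_ge_powr:
  fixes a :: "real \<Rightarrow> real"
  assumes decr: "antimono_on {0..} a"
    and lim: "((\<lambda>t. t powr \<gamma> * a t) \<longlongrightarrow> L) at_top" and "l < L"
  shows "eventually (\<lambda>t. l * t powr (1 - \<gamma>) \<le> integral {0..t} a) at_top"
  using order_tendstoD(1)[OF lim \<open>l < L\<close>] eventually_gt_at_top[of 0]
proof eventually_elim
  case (elim t)
  have "a integrable_on {0..t}"
    using decr by (rule integrable_on_antimono_on_atLeast)
  then have "integral {0..t} (\<lambda>_. a t) \<le> integral {0..t} a"
    using decr by (intro integral_le) (auto simp: monotone_on_def)
  then have "t * a t \<le> integral {0..t} a"
    using elim by simp
  moreover have "l * t powr (1 - \<gamma>) \<le> t powr (1 - \<gamma>) * (t powr \<gamma> * a t)"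
    using elim by (simp add: mult.commute)
  moreover have "t powr (1 - \<gamma>) * (t powr \<gamma> * a t) = t * a t"
    using elim by (simp add: powr_add[symmetric] mult.assoc[symmetric])
  ultimately show ?case
    by linarith
qed

lemma exp_neg_integral_smallo:
  fixes a :: "real \<Rightarrow> real"
  assumes decr: "antimono_on {0..} a"
    and lim: "((\<lambda>t. t powr \<gamma> * a t) \<longlongrightarrow> L) at_top" and "L > 0" and "\<gamma> < 1" and "\<mu> > 0"
  shows "(\<lambda>t. exp (- \<mu> * integral {0..t} a)) \<in> o[at_top](\<lambda>t. t powr k)"
proof (rule landau_o.big_small_trans)
  have "eventually (\<lambda>t. L / 2 * t powr (1 - \<gamma>) \<le> integral {0..t} a) at_top"
    using \<open>L > 0\<close> by (intro eventually_integral_ge_powr[OF decr lim]) simp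
  then have "eventually (\<lambda>t. norm (exp (- \<mu> * integral {0..t} a))
                           \<le> 1 * norm (exp (- (\<mu> * L / 2) * t powr (1 - \<gamma>)))) at_top"
    by eventually_elim (use \<open>\<mu> > 0\<close> in \<open>simp add: mult_left_mono\<close>)
  then show "(\<lambda>t. exp (- \<mu> * integral {0..t} a)) \<in> O[at_top](\<lambda>t. exp (- (\<mu> * L / 2) * t powr (1 - \<gamma>)))"
    by (rule bigoI)
  show "(\<lambda>t. exp (- (\<mu> * L / 2) * t powr (1 - \<gamma>))) \<in> o[at_top](\<lambda>t. t powr k)"
    using \<open>L > 0\<close> \<open>\<mu> > 0\<close> \<open>\<gamma> < 1\<close> by real_asymp
qed

lemma filterlim_powr_mult_exp_integral_at_top:
  fixes a :: "real \<Rightarrow> real"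
  assumes decr: "antimono_on {0..} a"
    and lim: "((\<lambda>t. t powr \<gamma> * a t) \<longlongrightarrow> L) at_top" and "L > 0" and "\<gamma> < 1" and "\<mu> > 0"
  shows "filterlim (\<lambda>t. t powr k * exp (\<mu> * integral {0..t} a)) at_top at_top"
proof (rule filterlim_at_top_mono)
  show "filterlim (\<lambda>t. t powr k * exp (\<mu> * L / 2 * t powr (1 - \<gamma>))) at_top at_top"
    using \<open>L > 0\<close> \<open>\<mu> > 0\<close> \<open>\<gamma> < 1\<close> by real_asymp
  have "eventually (\<lambda>t. L / 2 * t powr (1 - \<gamma>) \<le> integral {0..t} a) at_top"
    using \<open>L > 0\<close> by (intro eventually_integral_ge_powr[OF decr lim]) simp
  then show "eventually (\<lambda>t. t powr k * exp (\<mu> * L / 2 * t powr (1 - \<gamma>))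
                         \<le> t powr k * exp (\<mu> * integral {0..t} a)) at_top"
  proof eventually_elim
    case (elim t)
    then have "\<mu> * L / 2 * t powr (1 - \<gamma>) \<le> \<mu> * integral {0..t} a"
      using mult_left_mono[OF elim, of \<mu>] \<open>\<mu> > 0\<close> by simp
    then show ?case
      by (intro mult_left_mono) simp_all
  qed
qed

lemma filterlim_mult_at_top_of_powr_tendsto:
  fixes a :: "real \<Rightarrow> real"
  assumes lim: "((\<lambda>t. t powr \<gamma> * a t) \<longlongrightarrow> L) at_top" and "L > 0" and "\<gamma> < 1"
  shows "filterlim (\<lambda>x. x * a x) at_top at_top"
proof (rule filterlim_mono_eventually[OF _ order.refl order.refl])
  show "filterlim (\<lambda>x. x powr (1 - \<gamma>) * (x powr \<gamma> * a x)) at_top at_top"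
    by (rule filterlim_at_top_mult_tendsto_pos[OF lim \<open>L > 0\<close>]) (use \<open>\<gamma> < 1\<close> in real_asymp)
  show "eventually (\<lambda>x. x powr (1 - \<gamma>) * (x powr \<gamma> * a x) = x * a x) at_top"
    using eventually_gt_at_top[of 0]
    by eventually_elim (simp add: mult.assoc[symmetric] flip: powr_add)
qed

lemma tendsto_powr_mult_powr_div:
  fixes a :: "real \<Rightarrow> real"
  assumes lim: "((\<lambda>t. t powr \<gamma> * a t) \<longlongrightarrow> L) at_top" and "L > 0" and "\<gamma> < 1" and "\<mu> > 0"
    and k: "k = \<gamma> * (q - 1)"
  shows "((\<lambda>x. x powr (k + 1) * a x powr q / (\<mu> * x * a x - k)) \<longlongrightarrow> L powr (q - 1) / \<mu>) at_top"
proof -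
  define D where "D x = \<mu> * (x powr \<gamma> * a x) - k * x powr (\<gamma> - 1)" for x
  have "((\<lambda>x. x powr (\<gamma> - 1)) \<longlongrightarrow> 0) at_top"
    using \<open>\<gamma> < 1\<close> by real_asymp
  then have "(D \<longlongrightarrow> \<mu> * L - k * 0) at_top"
    unfolding D_def by (intro tendsto_intros lim)
  then have "((\<lambda>x. (x powr \<gamma> * a x) powr q / D x) \<longlongrightarrow> L powr q / (\<mu> * L)) at_top"
    using \<open>L > 0\<close> \<open>\<mu> > 0\<close> by (intro tendsto_divide tendsto_powr lim tendsto_const) auto
  moreover have "L powr q / (\<mu> * L) = L powr (q - 1) / \<mu>"
    using \<open>L > 0\<close> by (simp add: powr_diff)
  moreover have "eventually (\<lambda>x. (x powr \<gamma> * a x) powr q / D x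
                     = x powr (k + 1) * a x powr q / (\<mu> * x * a x - k)) at_top"
    using eventually_gt_at_top[of 0] order_tendstoD(1)[OF lim \<open>L > 0\<close>]
  proof eventually_elim
    case (elim x)
    then have "a x > 0"
      by (simp add: zero_less_mult_iff)
    have "(x powr \<gamma> * a x) powr q = x powr (\<gamma> * q) * a x powr q"
      using elim \<open>a x > 0\<close> by (simp add: powr_mult powr_powr)
    then have "x powr (k + 1) * a x powr q = x powr (1 - \<gamma>) * (x powr \<gamma> * a x) powr q"
      by (simp add: k algebra_simps flip: powr_add)
    moreover have "\<mu> * x * a x - k = x powr (1 - \<gamma>) * D x"
      using elim by (simp add: D_def algebra_simps flip: powr_add)
    ultimately show ?case
      using elim by simp
  qed
  ultimately show ?thesis
    by (simp add: tendsto_cong)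
qed

lemma has_integral_deriv_powr_mult_exp_integral:
  fixes a :: "real \<Rightarrow> real"
  assumes decr: "antimono_on {0..} a" and pc: "piecewise_continuous_nonneg a"
    and "0 < s" and "s \<le> t"
  shows "((\<lambda>x. exp (\<mu> * integral {0..x} a) * x powr (- k - 1) * (\<mu> * x * a x - k)) has_integral
           t powr (- k) * exp (\<mu> * integral {0..t} a) - s powr (- k) * exp (\<mu> * integral {0..s} a))
         {s..t}"
proof -
  have int: "a integrable_on {0..t}"
    using decr by (rule integrable_on_antimono_on_atLeast)
  have "0 \<le> t"
    using \<open>0 < s\<close> \<open>s \<le> t\<close> by simp
  then obtain S where S: "finite S" "\<forall>x\<in>{0..t} - S. continuous (at x within {0..}) a"
    using pc unfolding piecewise_continuous_nonneg_def by blast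
  show ?thesis
  proof (rule fundamental_theorem_of_calculus_interior_strong[OF S(1) \<open>s \<le> t\<close>])
    fix x assume x: "x \<in> {s<..<t} - S"
    then have "x > 0"
      using \<open>0 < s\<close> by simp
    have "((\<lambda>u. integral {0..u} a) has_real_derivative a x) (at x)"
      by (rule has_real_derivative_integral_continuous_at[OF int S(1)]) (use x S(2) \<open>0 < s\<close> in auto)
    then have "((\<lambda>u. u powr (- k) * exp (\<mu> * integral {0..u} a)) has_real_derivative
                 - k * x powr (- k - 1) * exp (\<mu> * integral {0..x} a)
                 + x powr (- k) * (exp (\<mu> * integral {0..x} a) * (\<mu> * a x))) (at x)"
      using \<open>x > 0\<close> by (intro derivative_eq_intros) auto
    moreover have "x powr (- k) = x * x powr (- k - 1)"
      using \<open>x > 0\<close> powr_add[of x 1 "- k - 1"] by simp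
    ultimately show "((\<lambda>u. u powr (- k) * exp (\<mu> * integral {0..u} a)) has_vector_derivative
                      exp (\<mu> * integral {0..x} a) * x powr (- k - 1) * (\<mu> * x * a x - k)) (at x)"
      by (simp add: has_real_derivative_iff_has_vector_derivative algebra_simps)
  next
    have "continuous_on {0..t} (\<lambda>u. integral {0..u} a)"
      by (rule indefinite_integral_continuous_1[OF int])
    then have "continuous_on {s..t} (\<lambda>u. integral {0..u} a)"
      by (rule continuous_on_subset) (use \<open>0 < s\<close> in auto)
    then show "continuous_on {s..t} (\<lambda>u. u powr (- k) * exp (\<mu> * integral {0..u} a))"
      using \<open>0 < s\<close> by (intro continuous_intros) auto
  qed
qed

lemma tendsto_div_integrals_at_top:
  fixes f g F G :: "real \<Rightarrow> real"
  assumes f: "\<And>s t. T\<^sub>0 \<le> s \<Longrightarrow> s \<le> t \<Longrightarrow> (f has_integral F t - F s) {s..t}"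
    and g: "\<And>s t. T\<^sub>0 \<le> s \<Longrightarrow> s \<le> t \<Longrightarrow> (g has_integral G t - G s) {s..t}"
    and g_pos: "eventually (\<lambda>x. 0 < g x) at_top"
    and ratio: "((\<lambda>x. f x / g x) \<longlongrightarrow> c) at_top"
    and G: "filterlim G at_top at_top"
  shows "((\<lambda>t. F t / G t) \<longlongrightarrow> c) at_top"
proof (rule tendstoI)
  fix e :: real assume "e > 0"
  define \<epsilon> where "\<epsilon> = e / 2"
  have "\<epsilon> > 0"
    using \<open>e > 0\<close> by (simp add: \<epsilon>_def)
  have "eventually (\<lambda>x. T\<^sub>0 \<le> x \<and> 0 < g x \<and> dist (f x / g x) c < \<epsilon>) at_top"
    using eventually_ge_at_top[of T\<^sub>0] g_pos tendstoD[OF ratio \<open>\<epsilon> > 0\<close>] by eventually_elim auto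
  then obtain T where T: "\<And>x. T \<le> x \<Longrightarrow> T\<^sub>0 \<le> x \<and> 0 < g x \<and> dist (f x / g x) c < \<epsilon>"
    by (auto simp: eventually_at_top_linorder)
  have bound: "\<bar>F t - c * G t - (F T - c * G T)\<bar> \<le> \<epsilon> * G t - \<epsilon> * G T" if "T \<le> t" for t
  proof -
    have "(c - \<epsilon>) * g x \<le> f x \<and> f x \<le> (c + \<epsilon>) * g x" if "x \<in> {T..t}" for x
    proof -
      have "0 < g x" "\<bar>f x / g x - c\<bar> < \<epsilon>"
        using T[of x] that by (auto simp: dist_real_def)
      then show ?thesis
        by (auto simp: abs_less_iff field_simps)
    qed
    moreover have "T\<^sub>0 \<le> T"
      using T[of T] by simp
    ultimately have "(c - \<epsilon>) * (G t - G T) \<le> F t - F T" "F t - F T \<le> (c + \<epsilon>) * (G t - G T)"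
      using has_integral_le[OF has_integral_mult_right[OF g] f]
        has_integral_le[OF f has_integral_mult_right[OF g]] \<open>T \<le> t\<close>
      by auto
    then show ?thesis
      by (simp add: abs_le_iff algebra_simps)
  qed
  define K where "K = \<bar>F T - c * G T\<bar> + \<epsilon> * \<bar>G T\<bar>"
  show "eventually (\<lambda>t. dist (F t / G t) c < e) at_top"
    using eventually_ge_at_top[of T] filterlim_at_top_dense[THEN iffD1, OF G, rule_format, of "max 0 (K / \<epsilon>)"]
  proof eventually_elim
    case (elim t)
    then have "G t > 0" "K / \<epsilon> < G t"
      by simp_all
    then have "K < \<epsilon> * G t"
      using \<open>\<epsilon> > 0\<close> by (simp add: pos_divide_less_eq mult.commute)
    have "\<bar>F t - c * G t\<bar> \<le> \<bar>F t - c * G t - (F T - c * G T)\<bar> + \<bar>F T - c * G T\<bar>"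
      using abs_triangle_ineq[of "F t - c * G t - (F T - c * G T)" "F T - c * G T"] by simp
    moreover have "- (\<epsilon> * G T) \<le> \<epsilon> * \<bar>G T\<bar>"
      using mult_left_mono[OF abs_ge_minus_self[of "G T"], of \<epsilon>] \<open>\<epsilon> > 0\<close> by simp
    moreover have "e * G t = 2 * (\<epsilon> * G t)"
      by (simp add: \<epsilon>_def)
    ultimately have "\<bar>F t - c * G t\<bar> < e * G t"
      using bound[OF elim(1)] \<open>K < \<epsilon> * G t\<close> unfolding K_def by linarith
    moreover have "F t / G t - c = (F t - c * G t) / G t"
      using \<open>G t > 0\<close> by (simp add: field_simps)
    ultimately show ?case
      using \<open>G t > 0\<close> by (simp add: dist_real_def abs_divide pos_divide_less_eq)
  qed
qed

lemma integral_mult_exp_neg_integral_tail: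
  fixes a h :: "real \<Rightarrow> real"
  assumes "a integrable_on {0..t}"
  shows "integral {0..t} (\<lambda>s. h s * exp (- \<mu> * integral {s..t} a))
         = exp (- \<mu> * integral {0..t} a) * integral {0..t} (\<lambda>s. h s * exp (\<mu> * integral {0..s} a))"
proof -
  have "h s * exp (- \<mu> * integral {s..t} a)
          = exp (- \<mu> * integral {0..t} a) * (h s * exp (\<mu> * integral {0..s} a))"
    if "s \<in> {0..t}" for s
  proof -
    have "integral {0..t} a = integral {0..s} a + integral {s..t} a"
      using Henstock_Kurzweil_Integration.integral_combine[OF _ _ assms] that by simp
    then have "exp (- \<mu> * integral {s..t} a) = exp (- \<mu> * integral {0..t} a) * exp (\<mu> * integral {0..s} a)"
      by (simp add: algebra_simps flip: exp_add)
    then show ?thesis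
      by simp
  qed
  then have "integral {0..t} (\<lambda>s. h s * exp (- \<mu> * integral {s..t} a))
      = integral {0..t} (\<lambda>s. exp (- \<mu> * integral {0..t} a) * (h s * exp (\<mu> * integral {0..s} a)))"
    by (rule integral_cong)
  then show ?thesis
    by simp
qed

lemma tendsto_powr_mult_integral_exp_neg_integral:
  fixes a :: "real \<Rightarrow> real"
  assumes nonneg: "\<forall>t\<ge>0. a t \<ge> 0" and decr: "antimono_on {0..} a"
    and pc: "piecewise_continuous_nonneg a"
    and lim: "((\<lambda>t. t powr \<gamma> * a t) \<longlongrightarrow> L) at_top" and "L > 0" and "\<gamma> < 1"
    and "\<mu> > 0" and "0 \<le> q"
  shows "((\<lambda>t. t powr (\<gamma> * (q - 1)) *
             integral {0..t} (\<lambda>s. a s powr q * exp (- \<mu> * integral {s..t} a)))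
          \<longlongrightarrow> L powr (q - 1) / \<mu>) at_top"
proof -
  define k where "k = \<gamma> * (q - 1)"
  define A where "A t = integral {0..t} a" for t
  define f where "f s = a s powr q * exp (\<mu> * A s)" for s
  define g where "g x = exp (\<mu> * A x) * x powr (- k - 1) * (\<mu> * x * a x - k)" for x
  define F where "F t = integral {0..t} f" for t
  define G where "G t = t powr (- k) * exp (\<mu> * A t)" for t
  have a_int: "a integrable_on {0..t}" for t
    using decr by (rule integrable_on_antimono_on_atLeast)
  have "((\<lambda>t. F t / G t) \<longlongrightarrow> L powr (q - 1) / \<mu>) at_top"
  proof (rule tendsto_div_integrals_at_top[where T\<^sub>0 = 1])
    fix s t :: real assume "1 \<le> s" "s \<le> t"
    have "antimono_on {0..t} (\<lambda>x. a x powr q)"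
      using nonneg decr \<open>0 \<le> q\<close> by (auto simp: monotone_on_def intro!: powr_mono2)
    moreover have "continuous_on {0..t} (\<lambda>x. exp (\<mu> * A x))"
      unfolding A_def by (intro continuous_intros indefinite_integral_continuous_1 a_int)
    ultimately have "f integrable_on {0..t}"
      unfolding f_def by (rule integrable_on_antimono_on_mult_continuous)
    then show "(f has_integral F t - F s) {s..t}"
      unfolding F_def using \<open>1 \<le> s\<close> \<open>s \<le> t\<close> by (intro has_integral_integral_diff) auto
    show "(g has_integral G t - G s) {s..t}"
      unfolding g_def G_def A_def using \<open>1 \<le> s\<close> \<open>s \<le> t\<close>
      by (intro has_integral_deriv_powr_mult_exp_integral[OF decr pc]) auto
  next
    have "eventually (\<lambda>x. k / \<mu> < x * a x) at_top"
      using filterlim_mult_at_top_of_powr_tendsto[OF lim \<open>L > 0\<close> \<open>\<gamma> < 1\<close>]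
      by (simp add: filterlim_at_top_dense)
    then show "eventually (\<lambda>x. 0 < g x) at_top"
      using eventually_gt_at_top[of 0]
    proof eventually_elim
      case (elim x)
      then have "0 < \<mu> * x * a x - k"
        using \<open>\<mu> > 0\<close> by (simp add: pos_divide_less_eq mult_ac)
      then show ?case
        using \<open>x > 0\<close> by (simp add: g_def)
    qed
  next
    have "eventually (\<lambda>x. x powr (k + 1) * a x powr q / (\<mu> * x * a x - k) = f x / g x) at_top"
      using eventually_gt_at_top[of 0]
    proof eventually_elim
      case (elim x)
      have "x powr (k + 1) * x powr (- k - 1) = 1"
        using elim by (simp flip: powr_add)
      then show ?case
        using elim by (simp add: f_def g_def divide_simps)
    qed
    then show "((\<lambda>x. f x / g x) \<longlongrightarrow> L powr (q - 1) / \<mu>) at_top"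
      using tendsto_powr_mult_powr_div[OF lim \<open>L > 0\<close> \<open>\<gamma> < 1\<close> \<open>\<mu> > 0\<close> k_def]
      by (rule Lim_transform_eventually[rotated])
  next
    show "filterlim G at_top at_top"
      unfolding G_def A_def
      by (rule filterlim_powr_mult_exp_integral_at_top[OF decr lim \<open>L > 0\<close> \<open>\<gamma> < 1\<close> \<open>\<mu> > 0\<close>])
  qed
  moreover have "eventually (\<lambda>t. F t / G t = t powr k *
                   integral {0..t} (\<lambda>s. a s powr q * exp (- \<mu> * integral {s..t} a))) at_top"
    using eventually_gt_at_top[of 0]
  proof eventually_elim
    case (elim t)
    have "integral {0..t} (\<lambda>s. a s powr q * exp (- \<mu> * integral {s..t} a)) = exp (- \<mu> * A t) * F t"
      unfolding F_def f_def A_def by (rule integral_mult_exp_neg_integral_tail[OF a_int])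
    then show ?case
      using elim by (simp add: G_def powr_minus exp_minus field_simps)
  qed
  ultimately show ?thesis
    unfolding k_def by (rule Lim_transform_eventually)
qed

theorem lemma2:
  fixes a :: "real \<Rightarrow> real" and \<gamma> \<mu> p L :: real
  assumes "0.5 < \<gamma>" and "\<gamma> < 1"
    and nonneg: "\<forall>t\<ge>0. a t \<ge> 0"
    and decr: "\<forall>x y. 0 \<le> x \<and> x \<le> y \<longrightarrow> a y \<le> a x"
    and bdd: "bounded (a ` {0..})"
    and pc: "piecewise_continuous_nonneg a"
    and lim: "((\<lambda>t. t powr \<gamma> * a t) \<longlongrightarrow> L) at_top" and "L > 0"
    and "\<mu> > 0" and "p > 2"
  shows "(\<lambda>t. exp (- \<mu> * integral {0..t} a)) \<in> o[at_top](\<lambda>t. t powr (- (p * \<gamma> / 2))) \<and>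
         ((\<lambda>t. t powr (p * \<gamma> / 2) *
            integral {0..t} (\<lambda>s. a s powr ((p + 2) / 2) * exp (- \<mu> * integral {s..t} a)))
          \<longlongrightarrow> L powr (p / 2) / \<mu>) at_top"
proof -
  \<comment> \<open>Neither \<open>\<gamma> > 0.5\<close> nor \<open>bdd\<close> is needed.\<close>
  have anti: "antimono_on {0..} a"
    using decr by (auto simp: monotone_on_def)
  have exponents: "(p + 2) / 2 - 1 = p / 2" "\<gamma> * (p / 2) = p * \<gamma> / 2"
    by (simp_all add: field_simps)
  have "0 \<le> (p + 2) / 2"
    using \<open>p > 2\<close> by simp
  note tendsto_powr_mult_integral_exp_neg_integral
         [OF nonneg anti pc lim \<open>L > 0\<close> \<open>\<gamma> < 1\<close> \<open>\<mu> > 0\<close> this]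
  moreover note exp_neg_integral_smallo
         [OF anti lim \<open>L > 0\<close> \<open>\<gamma> < 1\<close> \<open>\<mu> > 0\<close>, where k = "- (p * \<gamma> / 2)"]
  ultimately show ?thesis
    unfolding exponents by blast
qed

end
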